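(* Let $N\ge 1$ be an integer, $\Omega>0$, $\bar\gamma>0$, $\tau\in(0,1)$, $R>0$, and put $\gamma_0=2^R-1$. Let $\mathbf{h},\mathbf{g}\in\mathbb{C}^N$ be independent random vectors whose $2N$ entries are i.i.d. circularly symmetric complex Gaussian with mean $0$ and variance $\Omega$, and define $$\gamma_A=\frac{\tau}{1-\tau}\,\bar\gamma\,\|\mathbf{h}\|^2\|\mathbf{g}\|^2 .$$ Writing $x=\sqrt{\frac{(1-\tau)\gamma_0}{\tau\bar\gamma\Omega^2}}$, the outage probability satisfies $$P_{out}(\tau)=\Pr\big(\log_2(1+\gamma_A)<R\big)=\Pr(\gamma_A<\gamma_0)=1-\frac{2}{(N-1)!}\sum_{p=0}^{N-1}\frac{x^{N+p}K_{N-p}(2x)}{p!},$$ and consequently the delay-limited average throughput $\rho_{lim}=(1-P_{out}(\tau))R(1-\tau)$ equals $$\rho_{lim}=\frac{2R(1-\tau)}{(N-1)!}\sum_{p=0}^{N-1}\frac{x^{N+p}K_{N-p}(2x)}{p!}.$$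
   Context: $K_n(\cdot)$ denotes the modified Bessel function of the second kind of order $n$. $\|\cdot\|$ is the Euclidean norm. In the paper's model, $\mathbf{h}$ and $\mathbf{g}$ are the downlink and uplink channel vectors between an $N$-antenna access point and a single-antenna user, $\tau$ is the fraction of the block used for energy harvesting, $\bar\gamma=\eta P/\sigma^2$ is a normalized transmit SNR, $R$ is the user's fixed transmission rate, and $\gamma_A$ is the received SNR at the access point under maximum-ratio transmission and maximum-ratio combining. *)

theory Defs
  imports "HOL-Probability.Probability"
begin

text \<open>Modified Bessel function of the second kind of (real) order nu, for real argument z > 0,
  via the standard integral representation (DLMF 10.32.9):
  K_nu(z) = integral over t from 0 to infinity of exp(-z cosh t) cosh(nu t).\<close>
definition bessel_K :: "real \<Rightarrow> real \<Rightarrow> real" where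
  "bessel_K \<nu> z = integral {0..} (\<lambda>t. exp (- z * cosh t) * cosh (\<nu> * t))"

definition cscg_density :: "real \<Rightarrow> complex \<Rightarrow> ennreal" where
  "cscg_density \<Omega> z = ennreal (exp (- (cmod z)\<^sup>2 / \<Omega>) / (pi * \<Omega>))"

end

theory Submission
  imports Defs "HOL-Real_Asymp.Real_Asymp"
begin

text \<open>
  The squared modulus of a circularly symmetric complex Gaussian of variance \<Omega> is exponential
  with rate 1/\<Omega> (a layer-cake computation with the area of an annulus), so the squared norms of
  h and g are independent Erlang variables X, Y of shape N and rate l = 1/\<Omega>. Conditioning on
  X = u, the Erlang tail Pr(Y \<ge> t/u) is a Poisson distribution function, which turns
  Pr(X Y \<ge> t) into a finite sum of integrals of u^(N-1-n) exp(-l u - l t/u) over (0, \<infinity>); the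
  substitution u = sqrt t * exp s identifies each of them with 2 sqrt t^(N-n) K_(N-n)(2 l sqrt t).
\<close>

section \<open>The Bessel integral\<close>

lemma bessel_K_nonneg: "bessel_K \<nu> z \<ge> 0"
proof (cases "(\<lambda>t. exp (- z * cosh t) * cosh (\<nu> * t)) integrable_on {0..}")
  case True
  then show ?thesis unfolding bessel_K_def
    by (rule integral_nonneg) (auto simp: cosh_def)
next
  case False
  then show ?thesis unfolding bessel_K_def by (simp add: not_integrable_integral)
qed

lemma has_integral_reflect_add_atLeast0:
  fixes G :: "real \<Rightarrow> real"
  assumes G: "G absolutely_integrable_on UNIV"
  shows "((\<lambda>s. G s + G (- s)) has_integral integral UNIV G) {0..}"
proof -
  have G_pos: "(G has_integral integral {0..} G) {0..}"
    using set_integrable_subset[OF G] by (simp add: absolutely_integrable_on_def has_integral_integral)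
  have G_neg: "G absolutely_integrable_on {..0}"
    using G by (rule set_integrable_subset) auto
  have img: "{..0} = uminus ` {0::real..}" by simp
  have "(\<lambda>s. \<bar>-1\<bar> * G (- s)) absolutely_integrable_on {0..} \<and>
          integral {0..} (\<lambda>s. \<bar>-1\<bar> * G (- s)) = integral {..0} G
        \<longleftrightarrow> G absolutely_integrable_on {..0} \<and> integral {..0} G = integral {..0} G"
    unfolding img by (rule has_absolute_integral_change_of_variables_1') (auto intro!: derivative_eq_intros)
  then have "((\<lambda>s. G (- s)) has_integral integral {..0} G) {0..}"
    using G_neg unfolding absolutely_integrable_on_def by (simp add: has_integral_integral) metis
  with G_pos have "((\<lambda>s. G s + G (- s)) has_integral integral {0..} G + integral {..0} G) {0..}"
    by (rule has_integral_add)
  moreover have "integral {0..} G + integral {..0} G = integral UNIV G"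
  proof -
    have "(G has_integral integral {0..} G + integral {..0} G) ({0..} \<union> {..0})"
      using G_pos G_neg
      by (intro has_integral_Un) (auto simp: absolutely_integrable_on_def has_integral_integral
          intro: negligible_subset[OF negligible_sing[of 0]])
    moreover have "{0..} \<union> {..0} = (UNIV :: real set)" by auto
    ultimately show ?thesis by (simp add: integral_unique)
  qed
  ultimately show ?thesis by simp
qed

lemma absolutely_integrable_power_exp_inverse:
  fixes k :: nat and a b :: real
  assumes a: "a > 0" and b: "b \<ge> 0"
  shows "(\<lambda>w. w ^ k * exp (- a * w - b / w)) absolutely_integrable_on {0<..}"
proof (rule measurable_bounded_by_integrable_imp_absolutely_integrable)
  show "(\<lambda>w. w ^ k * exp (- a * w - b / w)) \<in> borel_measurable (lebesgue_on {0<..})"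
    by (intro continuous_imp_measurable_on_sets_lebesgue continuous_intros) auto
  show "{0::real<..} \<in> sets lebesgue" by simp
  have "(erlang_density k a has_integral 1) UNIV"
    using nn_integral_erlang_ith_moment[OF a, of k 0] a
    by (intro nn_integral_has_integral) auto
  then have "((\<lambda>w. fact k / a ^ Suc k * erlang_density k a w) has_integral fact k / a ^ Suc k) UNIV"
    using has_integral_mult_right[of "erlang_density k a" 1 UNIV "fact k / a ^ Suc k"] by simp
  then have "(\<lambda>w. fact k / a ^ Suc k * erlang_density k a w) absolutely_integrable_on UNIV"
    using a by (intro nonnegative_absolutely_integrable_1) (auto simp: has_integral_integrable)
  then have "(\<lambda>w. fact k / a ^ Suc k * erlang_density k a w) absolutely_integrable_on {0<..}"
    by (rule set_integrable_subset) auto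
  then show "(\<lambda>w. fact k / a ^ Suc k * erlang_density k a w) integrable_on {0<..}"
    by (simp add: absolutely_integrable_on_def)
  fix w :: real assume w: "w \<in> {0<..}"
  have "norm (w ^ k * exp (- a * w - b / w)) = w ^ k * exp (- a * w - b / w)" using w by simp
  also have "\<dots> \<le> w ^ k * exp (- a * w)"
    using w b by (auto intro!: mult_left_mono)
  also have "\<dots> = fact k / a ^ Suc k * erlang_density k a w"
    using w a by (simp add: erlang_density_def)
  finally show "norm (w ^ k * exp (- a * w - b / w)) \<le> fact k / a ^ Suc k * erlang_density k a w" .
qed

lemma has_absolute_integral_exp_substitution:
  fixes f :: "real \<Rightarrow> real" and c :: real
  assumes c: "c > 0" and f: "f absolutely_integrable_on {0<..}"
  shows "(\<lambda>s. c * exp s * f (c * exp s)) absolutely_integrable_on UNIV \<and>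
    integral UNIV (\<lambda>s. c * exp s * f (c * exp s)) = integral {0<..} f"
proof -
  have "range (\<lambda>s. c * exp s) = {0<..}"
  proof (intro equalityI subsetI)
    fix w :: real assume "w \<in> {0<..}"
    then have "w = c * exp (ln (w / c))" using c by simp
    then show "w \<in> range (\<lambda>s. c * exp s)" by blast
  qed (use c in auto)
  then have "(\<lambda>s. \<bar>c * exp s\<bar> * f (c * exp s)) absolutely_integrable_on UNIV \<and>
      integral UNIV (\<lambda>s. \<bar>c * exp s\<bar> * f (c * exp s)) = integral {0<..} f"
    using f c
    by (subst has_absolute_integral_change_of_variables_1'[where g="\<lambda>s. c * exp s"])
       (auto intro!: derivative_eq_intros simp: inj_on_def)
  moreover have "\<bar>c * exp s\<bar> = c * exp s" for s
    using c by simp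
  ultimately show ?thesis by simp
qed

lemma has_integral_bessel_K:
  fixes m :: nat and c z :: real
  assumes m: "m \<ge> 1" and c: "c > 0" and z: "z > 0"
  shows "((\<lambda>w. w ^ (m - 1) * exp (- (z / c) * w - z * c / w))
           has_integral 2 * c ^ m * bessel_K (real m) (2 * z)) {0<..}"
proof -
  define f where "f = (\<lambda>w. w ^ (m - 1) * exp (- (z / c) * w - z * c / w))"
  define G where "G = (\<lambda>s. c ^ m * exp (real m * s) * exp (- (2 * z) * cosh s))"
  have f: "f absolutely_integrable_on {0<..}"
    unfolding f_def using c z by (intro absolutely_integrable_power_exp_inverse) auto
  \<comment> \<open>The substitution \<open>w = c e\<^sup>s\<close> turns the exponent into \<open>-2 z cosh s\<close>.\<close>
  have f_subst: "c * exp s * f (c * exp s) = G s" for s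
  proof -
    have "c * exp s * (c * exp s) ^ (m - 1) = (c * exp s) ^ m"
      using m by (simp add: power_eq_if)
    also have "\<dots> = c ^ m * exp (real m * s)"
      by (simp add: power_mult_distrib exp_of_nat_mult)
    finally have "c * exp s * (c * exp s) ^ (m - 1) = c ^ m * exp (real m * s)" .
    moreover have "- (z / c) * (c * exp s) - z * c / (c * exp s) = - (2 * z) * cosh s"
      using c by (simp add: cosh_def exp_minus field_simps)
    ultimately show ?thesis
      by (simp add: f_def G_def mult.assoc)
  qed
  have "(\<lambda>s. c * exp s * f (c * exp s)) absolutely_integrable_on UNIV \<and>
      integral UNIV (\<lambda>s. c * exp s * f (c * exp s)) = integral {0<..} f"
    using c f by (rule has_absolute_integral_exp_substitution)
  then have "((\<lambda>s. G s + G (- s)) has_integral integral {0<..} f) {0..}"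
    unfolding f_subst by (metis has_integral_reflect_add_atLeast0)
  moreover have "G s + G (- s) = (2 * c ^ m) * (exp (- (2 * z) * cosh s) * cosh (real m * s))" for s
    by (simp add: G_def cosh_def exp_minus field_simps)
  ultimately have "((\<lambda>s. (2 * c ^ m) * (exp (- (2 * z) * cosh s) * cosh (real m * s)))
      has_integral integral {0<..} f) {0..}"
    by simp
  from has_integral_mult_right[OF this, of "1 / (2 * c ^ m)"]
  have "((\<lambda>s. exp (- (2 * z) * cosh s) * cosh (real m * s))
      has_integral integral {0<..} f / (2 * c ^ m)) {0..}"
    using c by simp
  then have "bessel_K (real m) (2 * z) = integral {0<..} f / (2 * c ^ m)"
    unfolding bessel_K_def by (rule integral_unique)
  moreover have "(f has_integral integral {0<..} f) {0<..}"
    using f by (simp add: absolutely_integrable_on_def has_integral_integral)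
  ultimately show ?thesis
    using c by (simp add: f_def)
qed

lemma nn_integral_power_exp_bessel_K:
  fixes k :: nat and l t :: real
  assumes l: "l > 0" and t: "t > 0"
  shows "(\<integral>\<^sup>+u. ennreal (u ^ k * exp (- l * u - l * t / u)) * indicator {0<..} u \<partial>lborel)
    = ennreal (2 * sqrt t ^ (k + 1) * bessel_K (real (k + 1)) (2 * (l * sqrt t)))"
proof -
  have "((\<lambda>u. u ^ k * exp (- l * u - l * t / u))
      has_integral 2 * sqrt t ^ (k + 1) * bessel_K (real (k + 1)) (2 * (l * sqrt t))) {0<..}"
    using has_integral_bessel_K[of "k + 1" "sqrt t" "l * sqrt t"] l t by (simp add: mult.assoc)
  then show ?thesis
    by (rule nn_integral_has_integral_lebesgue'[rotated]) auto
qed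

section \<open>Squared modulus of a complex Gaussian\<close>

lemma nn_integral_exp_atLeast:
  fixes l C b :: real
  assumes l: "l > 0" and C: "C \<ge> 0"
  shows "(\<integral>\<^sup>+t. ennreal (C * exp (- l * t)) * indicator {b..} t \<partial>lborel) = ennreal (C / l * exp (- l * b))"
proof -
  have "(\<integral>\<^sup>+t. ennreal (C * exp (- l * t)) * indicator {b..} t \<partial>lborel) = 0 - (- (C / l) * exp (- l * b))"
  proof (rule nn_integral_FTC_atLeast)
    show "((\<lambda>t. - (C / l) * exp (- l * t)) \<longlongrightarrow> 0) at_top"
      using l by real_asymp
    fix t :: real
    show "((\<lambda>t. - (C / l) * exp (- l * t)) has_real_derivative C * exp (- l * t)) (at t)"
      using l by (auto intro!: derivative_eq_intros)
  qed (use C in auto)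
  then show ?thesis by simp
qed

lemma nn_integral_linear_exp_atLeast:
  fixes l a :: real
  assumes l: "l > 0"
  shows "(\<integral>\<^sup>+t. ennreal (l\<^sup>2 * (t - a) * exp (- l * t)) * indicator {a..} t \<partial>lborel) = ennreal (exp (- l * a))"
proof -
  have "(\<integral>\<^sup>+t. ennreal (l\<^sup>2 * (t - a) * exp (- l * t)) * indicator {a..} t \<partial>lborel)
      = 0 - (- (l * (a - a) + 1) * exp (- l * a))"
  proof (rule nn_integral_FTC_atLeast[where F="\<lambda>t. - (l * (t - a) + 1) * exp (- l * t)"])
    show "((\<lambda>t. - (l * (t - a) + 1) * exp (- l * t)) \<longlongrightarrow> 0) at_top"
      using l by real_asymp
    fix t :: real
    show "((\<lambda>t. - (l * (t - a) + 1) * exp (- l * t)) has_real_derivative l\<^sup>2 * (t - a) * exp (- l * t)) (at t)"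
      by (auto intro!: derivative_eq_intros simp: power2_eq_square algebra_simps)
    assume "a \<le> t"
    then show "0 \<le> l\<^sup>2 * (t - a) * exp (- l * t)" by simp
  qed auto
  then show ?thesis by simp
qed

lemma emeasure_lborel_annulus:
  fixes a s :: real
  assumes a: "a \<ge> 0"
  shows "emeasure lborel {z::complex. a < (cmod z)\<^sup>2 \<and> (cmod z)\<^sup>2 \<le> s}
    = (if a \<le> s then ennreal (pi * (s - a)) else 0)"
proof (cases "a \<le> s")
  case True
  have cball_eq: "cball 0 (sqrt r) = {z::complex. (cmod z)\<^sup>2 \<le> r}" if "r \<ge> 0" for r
    using that real_sqrt_le_iff[of "(cmod _)\<^sup>2" r] by (auto simp: set_eq_iff)
  have vol: "emeasure lborel (cball (0::complex) (sqrt r)) = ennreal (pi * r)" if "r \<ge> 0" for r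
    using that by (simp add: emeasure_cball unit_ball_vol_2)
  have "{z::complex. a < (cmod z)\<^sup>2 \<and> (cmod z)\<^sup>2 \<le> s} = cball 0 (sqrt s) - cball 0 (sqrt a)"
    using a True by (auto simp: cball_eq)
  also have "emeasure lborel \<dots> = emeasure lborel (cball (0::complex) (sqrt s)) - emeasure lborel (cball (0::complex) (sqrt a))"
    using a True by (intro emeasure_Diff) (simp_all add: vol subset_cball)
  also have "\<dots> = ennreal (pi * (s - a))"
    using a True by (simp add: vol ennreal_minus right_diff_distrib)
  finally show ?thesis using True by simp
next
  case False
  then have empty: "{z::complex. a < (cmod z)\<^sup>2 \<and> (cmod z)\<^sup>2 \<le> s} = {}" by auto
  show ?thesis using False unfolding empty by simp
qed

lemma nn_integral_cscg_density_norm_sq_greater: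
  fixes \<Omega> a :: real
  assumes \<Omega>: "\<Omega> > 0" and a: "a \<ge> 0"
  shows "(\<integral>\<^sup>+z. cscg_density \<Omega> z * indicator {z. a < (cmod z)\<^sup>2} z \<partial>lborel) = ennreal (exp (- a / \<Omega>))"
proof -
  define l where "l = 1 / \<Omega>"
  have l: "l > 0" using \<Omega> by (simp add: l_def)
  define H where "H = (\<lambda>(z::complex, t::real). ennreal (l\<^sup>2 / pi * exp (- l * t))
      * indicator {(cmod z)\<^sup>2..} t * indicator {z. a < (cmod z)\<^sup>2} z)"
  have H_measurable: "H \<in> borel_measurable (lborel \<Otimes>\<^sub>M lborel)"
  proof -
    have "H = (\<lambda>p. ennreal (l\<^sup>2 / pi * exp (- l * snd p))
        * indicator {p. (cmod (fst p))\<^sup>2 \<le> snd p \<and> a < (cmod (fst p))\<^sup>2} p)"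
      by (auto simp: H_def fun_eq_iff split: split_indicator)
    also have "\<dots> \<in> borel_measurable (lborel \<Otimes>\<^sub>M lborel)" by measurable
    finally show ?thesis .
  qed
  \<comment> \<open>Layer cake: the density is the integral of its own tail, then Tonelli.\<close>
  have "(\<integral>\<^sup>+z. cscg_density \<Omega> z * indicator {z. a < (cmod z)\<^sup>2} z \<partial>lborel)
      = (\<integral>\<^sup>+z. \<integral>\<^sup>+t. H (z, t) \<partial>lborel \<partial>lborel)"
  proof (intro nn_integral_cong)
    fix z :: complex
    have "cscg_density \<Omega> z = ennreal (l\<^sup>2 / pi / l * exp (- l * (cmod z)\<^sup>2))"
      using \<Omega> by (simp add: cscg_density_def l_def power2_eq_square field_simps)
    also have "\<dots> = (\<integral>\<^sup>+t. ennreal (l\<^sup>2 / pi * exp (- l * t)) * indicator {(cmod z)\<^sup>2..} t \<partial>lborel)"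
      using l by (rule nn_integral_exp_atLeast[symmetric]) simp
    finally show "cscg_density \<Omega> z * indicator {z. a < (cmod z)\<^sup>2} z = (\<integral>\<^sup>+t. H (z, t) \<partial>lborel)"
      by (simp add: H_def nn_integral_multc)
  qed
  also have "\<dots> = (\<integral>\<^sup>+t. \<integral>\<^sup>+z. H (z, t) \<partial>lborel \<partial>lborel)"
    using lborel_pair.Fubini'[of "\<lambda>z t. H (z, t)"] H_measurable by simp
  also have "\<dots> = (\<integral>\<^sup>+t. ennreal (l\<^sup>2 / pi * exp (- l * t))
      * emeasure lborel {z::complex. a < (cmod z)\<^sup>2 \<and> (cmod z)\<^sup>2 \<le> t} \<partial>lborel)"
  proof (intro nn_integral_cong)
    fix t :: real
    have "(\<lambda>z. H (z, t)) = (\<lambda>z. ennreal (l\<^sup>2 / pi * exp (- l * t))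
        * indicator {z::complex. a < (cmod z)\<^sup>2 \<and> (cmod z)\<^sup>2 \<le> t} z)"
      by (auto simp: H_def split: split_indicator)
    then show "(\<integral>\<^sup>+z. H (z, t) \<partial>lborel) = ennreal (l\<^sup>2 / pi * exp (- l * t))
        * emeasure lborel {z::complex. a < (cmod z)\<^sup>2 \<and> (cmod z)\<^sup>2 \<le> t}"
      by (simp add: nn_integral_cmult_indicator)
  qed
  also have "\<dots> = (\<integral>\<^sup>+t. ennreal (l\<^sup>2 * (t - a) * exp (- l * t)) * indicator {a..} t \<partial>lborel)"
    using a l by (intro nn_integral_cong)
      (simp add: emeasure_lborel_annulus ennreal_mult'[symmetric] split: split_indicator)
  also have "\<dots> = ennreal (exp (- l * a))"
    using l by (rule nn_integral_linear_exp_atLeast)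
  also have "\<dots> = ennreal (exp (- a / \<Omega>))"
    by (simp add: l_def)
  finally show ?thesis .
qed

lemma (in prob_space) cscg_norm_sq_exponential_distributed:
  fixes Z :: "'a \<Rightarrow> complex"
  assumes \<Omega>: "\<Omega> > 0" and Z: "distributed M lborel Z (cscg_density \<Omega>)"
  shows "distributed M lborel (\<lambda>\<omega>. (cmod (Z \<omega>))\<^sup>2) (exponential_density (1 / \<Omega>))"
proof -
  have [measurable]: "Z \<in> borel_measurable M"
    using distributed_measurable[OF Z] by simp
  have "prob {\<omega> \<in> space M. (cmod (Z \<omega>))\<^sup>2 \<le> a} = 1 - exp (- a * (1 / \<Omega>))" if a: "a \<ge> 0" for a
  proof -
    have "emeasure M {\<omega> \<in> space M. a < (cmod (Z \<omega>))\<^sup>2} = emeasure M (Z -` {z. a < (cmod z)\<^sup>2} \<inter> space M)"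
      by (intro arg_cong[where f="emeasure M"]) auto
    also have "\<dots> = (\<integral>\<^sup>+z. cscg_density \<Omega> z * indicator {z. a < (cmod z)\<^sup>2} z \<partial>lborel)"
      by (rule distributed_emeasure[OF Z]) measurable
    also have "\<dots> = ennreal (exp (- a / \<Omega>))"
      using \<Omega> a by (rule nn_integral_cscg_density_norm_sq_greater)
    finally have "prob {\<omega> \<in> space M. a < (cmod (Z \<omega>))\<^sup>2} = exp (- a / \<Omega>)"
      by (simp add: emeasure_eq_measure)
    moreover have "{\<omega> \<in> space M. (cmod (Z \<omega>))\<^sup>2 \<le> a} = space M - {\<omega> \<in> space M. a < (cmod (Z \<omega>))\<^sup>2}"
      by auto
    ultimately show ?thesis
      by (simp add: prob_compl)
  qed
  then show ?thesis
    using \<Omega> by (subst exponential_distributed_iff) auto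
qed

section \<open>Product of two independent Erlang variables\<close>

lemma nn_integral_erlang_atLeast:
  fixes l b :: real
  assumes l: "l > 0" and b: "b \<ge> 0"
  shows "(\<integral>\<^sup>+v. ennreal (erlang_density K l v) * indicator {b..} v \<partial>lborel)
     = ennreal (\<Sum>n\<le>K. (l * b) ^ n * exp (- l * b) / fact n)"
proof -
  define S where "S = (\<Sum>n\<le>K. (l * b) ^ n * exp (- l * b) / fact n)"
  define I where "I = (\<integral>\<^sup>+v. ennreal (erlang_density K l v) * indicator {b<..} v \<partial>lborel)"
  have S_nonneg: "S \<ge> 0" unfolding S_def using l b by (intro sum_nonneg) auto
  have CDF: "erlang_CDF K l b = 1 - S" using b by (simp add: erlang_CDF_def S_def mult_ac)
  have S_le_1: "S \<le> 1" using erlang_CDF_nonneg[OF l, of K b] CDF by simp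
  have "ennreal (1 - S) + I = 1"
  proof -
    have "ennreal (1 - S) + I = (\<integral>\<^sup>+v. ennreal (erlang_density K l v) * indicator {..b} v \<partial>lborel) + I"
      using nn_integral_erlang_density[OF l, of K b] CDF by simp
    also have "\<dots> = (\<integral>\<^sup>+v. ennreal (erlang_density K l v) * indicator {..b} v
        + ennreal (erlang_density K l v) * indicator {b<..} v \<partial>lborel)"
      unfolding I_def by (intro nn_integral_add[symmetric]) auto
    also have "\<dots> = (\<integral>\<^sup>+v. ennreal (erlang_density K l v * v ^ 0) \<partial>lborel)"
      by (intro nn_integral_cong) (auto split: split_indicator)
    also have "\<dots> = 1"
      using nn_integral_erlang_ith_moment[OF l, of K 0] by simp
    finally show ?thesis .
  qed
  then have "I = 1 - ennreal (1 - S)"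
    by (metis ennreal_add_diff_cancel_left ennreal_neq_top)
  also have "\<dots> = ennreal S"
    using S_nonneg S_le_1 by (subst ennreal_1[symmetric], subst ennreal_minus) auto
  finally have "I = ennreal S" .
  moreover have "(\<integral>\<^sup>+v. ennreal (erlang_density K l v) * indicator {b..} v \<partial>lborel) = I"
    unfolding I_def
    by (intro nn_integral_cong_AE) (use AE_lborel_singleton[of b] in \<open>auto split: split_indicator\<close>)
  ultimately show ?thesis by (simp add: S_def)
qed

lemma erlang_density_mult_poisson_cdf:
  fixes u l t :: real and K :: nat
  assumes u: "u > 0"
  shows "erlang_density K l u * (\<Sum>n\<le>K. (l * (t / u)) ^ n * exp (- l * (t / u)) / fact n)
    = (\<Sum>n\<le>K. l ^ (K + 1) * (l * t) ^ n / (fact K * fact n) * (u ^ (K - n) * exp (- l * u - l * t / u)))"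
  unfolding sum_distrib_left
proof (intro sum.cong refl)
  fix n assume n: "n \<in> {..K}"
  have uK: "u ^ K = u ^ (K - n) * u ^ n" using n by (simp add: power_add[symmetric])
  have e: "exp (- l * u) * exp (- l * (t / u)) = exp (- l * u - l * t / u)" by (simp add: exp_add[symmetric])
  show "erlang_density K l u * ((l * (t / u)) ^ n * exp (- l * (t / u)) / fact n)
      = l ^ (K + 1) * (l * t) ^ n / (fact K * fact n) * (u ^ (K - n) * exp (- l * u - l * t / u))"
    using u unfolding erlang_density_def e[symmetric]
    by (simp add: uK field_simps)
qed

lemma mult_power_sqrt_eq_power:
  fixes l t :: real and K n :: nat
  assumes t: "t \<ge> 0" and n: "n \<le> K"
  shows "l ^ (K + 1) * (l * t) ^ n * sqrt t ^ (K + 1 - n) = (l * sqrt t) ^ (K + 1 + n)"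
proof -
  have "(l * t) ^ n = l ^ n * sqrt t ^ (2 * n)"
    using t by (simp add: power_mult_distrib power_mult)
  then have "l ^ (K + 1) * (l * t) ^ n * sqrt t ^ (K + 1 - n)
      = l ^ (K + 1 + n) * sqrt t ^ (2 * n + (K + 1 - n))"
    by (simp add: power_add mult_ac)
  also have "\<dots> = (l * sqrt t) ^ (K + 1 + n)"
    using n by (simp add: power_mult_distrib add.commute)
  finally show ?thesis .
qed

lemma nn_integral_erlang_mult_poisson_cdf:
  fixes l t :: real and K :: nat
  assumes l: "l > 0" and t: "t > 0"
  shows "(\<integral>\<^sup>+u. ennreal (erlang_density K l u * (\<Sum>n\<le>K. (l * (t / u)) ^ n * exp (- l * (t / u)) / fact n))
      * indicator {0<..} u \<partial>lborel)
    = ennreal (\<Sum>n\<le>K. 2 * (l * sqrt t) ^ (K + 1 + n) * bessel_K (real (K + 1 - n)) (2 * (l * sqrt t))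
      / (fact K * fact n))"
proof -
  define c where "c = (\<lambda>n. l ^ (K + 1) * (l * t) ^ n / (fact K * fact n))"
  define B where "B = (\<lambda>n. bessel_K (real (K + 1 - n)) (2 * (l * sqrt t)))"
  have "(\<integral>\<^sup>+u. ennreal (erlang_density K l u * (\<Sum>n\<le>K. (l * (t / u)) ^ n * exp (- l * (t / u)) / fact n))
      * indicator {0<..} u \<partial>lborel)
    = (\<integral>\<^sup>+u. (\<Sum>n\<le>K. ennreal (c n)
      * (ennreal (u ^ (K - n) * exp (- l * u - l * t / u)) * indicator {0<..} u)) \<partial>lborel)"
  proof (intro nn_integral_cong)
    fix u :: real
    show "ennreal (erlang_density K l u * (\<Sum>n\<le>K. (l * (t / u)) ^ n * exp (- l * (t / u)) / fact n))
        * indicator {0<..} u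
      = (\<Sum>n\<le>K. ennreal (c n) * (ennreal (u ^ (K - n) * exp (- l * u - l * t / u)) * indicator {0<..} u))"
    proof (cases "u > 0")
      case True
      then show ?thesis
        using l t unfolding erlang_density_mult_poisson_cdf[OF True] c_def
        by (simp add: ennreal_mult[symmetric] sum_ennreal[symmetric] del: sum_ennreal)
    qed simp
  qed
  also have "\<dots> = (\<Sum>n\<le>K. ennreal (c n)
      * (\<integral>\<^sup>+u. ennreal (u ^ (K - n) * exp (- l * u - l * t / u)) * indicator {0<..} u \<partial>lborel))"
    by (subst nn_integral_sum) (auto simp: nn_integral_cmult)
  also have "\<dots> = (\<Sum>n\<le>K. ennreal (c n) * ennreal (2 * sqrt t ^ (K + 1 - n) * B n))"
  proof (intro sum.cong refl arg_cong2[where f="(*)"])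
    fix n assume "n \<in> {..K}"
    then have "K - n + 1 = K + 1 - n" by simp
    then show "(\<integral>\<^sup>+u. ennreal (u ^ (K - n) * exp (- l * u - l * t / u)) * indicator {0<..} u \<partial>lborel)
        = ennreal (2 * sqrt t ^ (K + 1 - n) * B n)"
      using nn_integral_power_exp_bessel_K[OF l t, of "K - n"] by (simp only: B_def)
  qed
  also have "\<dots> = ennreal (\<Sum>n\<le>K. 2 * (l * sqrt t) ^ (K + 1 + n) * B n / (fact K * fact n))"
  proof -
    have "c n * (2 * sqrt t ^ (K + 1 - n) * B n) = 2 * (l * sqrt t) ^ (K + 1 + n) * B n / (fact K * fact n)"
      if "n \<le> K" for n
      using mult_power_sqrt_eq_power[OF _ that, of t l] t by (simp add: c_def) blast
    moreover have "c n \<ge> 0" "B n \<ge> 0" for n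
      using l t by (simp_all add: c_def B_def bessel_K_nonneg)
    ultimately show ?thesis
      using l t by (simp add: ennreal_mult'[symmetric] sum_ennreal[symmetric] del: sum_ennreal)
  qed
  finally show ?thesis by (simp add: B_def)
qed

lemma nn_integral_erlang_product_section:
  fixes l t u :: real
  assumes l: "l > 0" and t: "t > 0"
  shows "(\<integral>\<^sup>+v. ennreal (erlang_density K l u) * ennreal (erlang_density K l v)
      * indicator {p. t \<le> fst p * snd p} (u, v) \<partial>lborel)
    = ennreal (erlang_density K l u * (\<Sum>n\<le>K. (l * (t / u)) ^ n * exp (- l * (t / u)) / fact n))
      * indicator {0<..} u"
proof (cases "u > 0")
  case True
  have "(\<integral>\<^sup>+v. ennreal (erlang_density K l u) * ennreal (erlang_density K l v)
      * indicator {p. t \<le> fst p * snd p} (u, v) \<partial>lborel)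
    = ennreal (erlang_density K l u) * (\<integral>\<^sup>+v. ennreal (erlang_density K l v) * indicator {t / u..} v \<partial>lborel)"
    using True
    by (subst nn_integral_cmult[symmetric])
       (auto intro!: nn_integral_cong simp: pos_divide_le_eq mult.commute split: split_indicator)
  then show ?thesis
    using True t l by (simp add: nn_integral_erlang_atLeast ennreal_mult'[symmetric])
next
  case False
  then have "(\<lambda>v. ennreal (erlang_density K l u) * ennreal (erlang_density K l v)
      * indicator {p. t \<le> fst p * snd p} (u, v)) = (\<lambda>_. 0)"
    using t by (cases "u = 0") (auto simp: erlang_density_def)
  with False show ?thesis by simp
qed

lemma (in prob_space) emeasure_erlang_product_atLeast:
  fixes l t :: real and X Y :: "'a \<Rightarrow> real"
  assumes l: "l > 0" and t: "t > 0"
    and X: "distributed M lborel X (erlang_density K l)"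
    and Y: "distributed M lborel Y (erlang_density K l)"
    and XY: "indep_var borel X borel Y"
  shows "emeasure M {\<omega> \<in> space M. t \<le> X \<omega> * Y \<omega>}
    = ennreal (\<Sum>n\<le>K. 2 * (l * sqrt t) ^ (K + 1 + n) * bessel_K (real (K + 1 - n)) (2 * (l * sqrt t))
        / (fact K * fact n))"
proof -
  define D where "D = erlang_density K l"
  define A where "A = {p :: real \<times> real. t \<le> fst p * snd p}"
  have "indep_var lborel X lborel Y"
    using XY unfolding indep_var_def indep_vars_def by (simp add: case_bool_if)
  then have joint: "distributed M (lborel \<Otimes>\<^sub>M lborel) (\<lambda>\<omega>. (X \<omega>, Y \<omega>)) (\<lambda>(u, v). ennreal (D u) * ennreal (D v))"
    unfolding D_def using X Y by (intro distributed_joint_indep) (auto intro: lborel.sigma_finite_measure_axioms)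
  have "{p \<in> space (lborel \<Otimes>\<^sub>M lborel). t \<le> fst p * snd p} \<in> sets (lborel \<Otimes>\<^sub>M lborel)"
    by measurable
  then have A: "A \<in> sets (lborel \<Otimes>\<^sub>M lborel)"
    by (simp add: A_def space_pair_measure)
  have "emeasure M {\<omega> \<in> space M. t \<le> X \<omega> * Y \<omega>} = emeasure M ((\<lambda>\<omega>. (X \<omega>, Y \<omega>)) -` A \<inter> space M)"
    by (intro arg_cong[where f="emeasure M"]) (auto simp: A_def)
  also have "\<dots> = (\<integral>\<^sup>+p. (\<lambda>(u, v). ennreal (D u) * ennreal (D v)) p * indicator A p \<partial>(lborel \<Otimes>\<^sub>M lborel))"
    by (rule distributed_emeasure[OF joint A])
  also have "\<dots> = (\<integral>\<^sup>+u. \<integral>\<^sup>+v. ennreal (D u) * ennreal (D v) * indicator A (u, v) \<partial>lborel \<partial>lborel)"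
    by (subst lborel.nn_integral_fst[symmetric]) (auto simp: D_def A_def)
  also have "\<dots> = (\<integral>\<^sup>+u. ennreal (D u * (\<Sum>n\<le>K. (l * (t / u)) ^ n * exp (- l * (t / u)) / fact n))
      * indicator {0<..} u \<partial>lborel)"
    unfolding D_def A_def using l t by (intro nn_integral_cong nn_integral_erlang_product_section)
  also have "\<dots> = ennreal (\<Sum>n\<le>K. 2 * (l * sqrt t) ^ (K + 1 + n) * bessel_K (real (K + 1 - n)) (2 * (l * sqrt t))
        / (fact K * fact n))"
    unfolding D_def using l t by (rule nn_integral_erlang_mult_poisson_cdf)
  finally show ?thesis .
qed

section \<open>Outage probability\<close>

lemma (in prob_space) indep_var_sums_disjoint:
  fixes F :: "'i \<Rightarrow> 'a \<Rightarrow> 'b::topological_space" and f :: "'b \<Rightarrow> real"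
  assumes F: "indep_vars (\<lambda>_. borel) F I" and f: "f \<in> borel_measurable borel"
    and A: "A \<subseteq> I" and B: "B \<subseteq> I" and AB: "A \<inter> B = {}"
  shows "indep_var borel (\<lambda>\<omega>. \<Sum>i\<in>A. f (F i \<omega>)) borel (\<lambda>\<omega>. \<Sum>i\<in>B. f (F i \<omega>))"
proof -
  define K where "K = (\<lambda>b::bool. if b then A else B)"
  define S where "S = (\<lambda>(b::bool) (\<phi>::'i \<Rightarrow> 'b). \<Sum>i\<in>K b. f (\<phi> i))"
  have "indep_vars (\<lambda>b. PiM (K b) (\<lambda>_. borel)) (\<lambda>b \<omega>. restrict (\<lambda>i. F i \<omega>) (K b)) UNIV"
    using A B AB by (intro indep_vars_restrict[OF F]) (auto simp: K_def disjoint_family_on_def)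
  then have "indep_vars (\<lambda>_. borel) (\<lambda>b \<omega>. S b (restrict (\<lambda>i. F i \<omega>) (K b))) UNIV"
    unfolding S_def
    by (rule indep_vars_compose2) (auto intro!: borel_measurable_sum measurable_compose[OF _ f])
  moreover have "(\<lambda>b \<omega>. S b (restrict (\<lambda>i. F i \<omega>) (K b)))
      = case_bool (\<lambda>\<omega>. \<Sum>i\<in>A. f (F i \<omega>)) (\<lambda>\<omega>. \<Sum>i\<in>B. f (F i \<omega>))"
    by (auto simp: fun_eq_iff S_def K_def split: bool.split)
  ultimately show ?thesis
    unfolding indep_var_def by (simp add: case_bool_if)
qed

lemma (in prob_space) cscg_sum_norm_sq_erlang_distributed:
  fixes F :: "'i \<Rightarrow> 'a \<Rightarrow> complex"
  assumes \<Omega>: "\<Omega> > 0" and J: "finite J" "J \<noteq> {}"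
    and ind: "indep_vars (\<lambda>_. borel) F J"
    and F: "\<And>i. i \<in> J \<Longrightarrow> distributed M lborel (F i) (cscg_density \<Omega>)"
  shows "distributed M lborel (\<lambda>\<omega>. \<Sum>i\<in>J. (cmod (F i \<omega>))\<^sup>2) (erlang_density (card J - 1) (1 / \<Omega>))"
proof (rule exponential_distributed_sum[OF J])
  show "indep_vars (\<lambda>_. borel) (\<lambda>i \<omega>. (cmod (F i \<omega>))\<^sup>2) J"
    by (rule indep_vars_compose2[OF ind]) measurable
qed (use \<Omega> F cscg_norm_sq_exponential_distributed in auto)

lemma (in prob_space) channel_gains_erlang_indep:
  fixes h g :: "nat \<Rightarrow> 'a \<Rightarrow> complex"
  assumes \<Omega>: "\<Omega> > 0" and N: "N \<ge> 1"
    and ind: "indep_vars (\<lambda>_. borel) (\<lambda>i. case i of Inl k \<Rightarrow> h k | Inr k \<Rightarrow> g k) ({..<N} <+> {..<N})"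
    and h: "\<forall>k<N. distributed M lborel (h k) (cscg_density \<Omega>)"
    and g: "\<forall>k<N. distributed M lborel (g k) (cscg_density \<Omega>)"
  shows "distributed M lborel (\<lambda>\<omega>. \<Sum>k<N. (cmod (h k \<omega>))\<^sup>2) (erlang_density (N - 1) (1 / \<Omega>))"
    and "distributed M lborel (\<lambda>\<omega>. \<Sum>k<N. (cmod (g k \<omega>))\<^sup>2) (erlang_density (N - 1) (1 / \<Omega>))"
    and "indep_var borel (\<lambda>\<omega>. \<Sum>k<N. (cmod (h k \<omega>))\<^sup>2) borel (\<lambda>\<omega>. \<Sum>k<N. (cmod (g k \<omega>))\<^sup>2)"
proof -
  define F where "F = (\<lambda>i. case i of Inl k \<Rightarrow> h k | Inr k \<Rightarrow> g k)"
  have sum_Inl: "(\<Sum>i\<in>Inl ` {..<N}. (cmod (F i \<omega>))\<^sup>2) = (\<Sum>k<N. (cmod (h k \<omega>))\<^sup>2)"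
    and sum_Inr: "(\<Sum>i\<in>Inr ` {..<N}. (cmod (F i \<omega>))\<^sup>2) = (\<Sum>k<N. (cmod (g k \<omega>))\<^sup>2)" for \<omega>
    by (simp_all add: F_def sum.reindex)
  have sum_erlang: "distributed M lborel (\<lambda>\<omega>. \<Sum>i\<in>J. (cmod (F i \<omega>))\<^sup>2) (erlang_density (N - 1) (1 / \<Omega>))"
    if J: "J = Inl ` {..<N} \<or> J = Inr ` {..<N}" for J
  proof -
    have "J \<subseteq> {..<N} <+> {..<N}" "card J = N" "J \<noteq> {}"
      using J N by (auto simp: card_image lessThan_empty_iff)
    moreover have "distributed M lborel (F i) (cscg_density \<Omega>)" if "i \<in> J" for i
      using J h g that by (auto simp: F_def)
    ultimately show ?thesis
      using cscg_sum_norm_sq_erlang_distributed[OF \<Omega>, of J F] indep_vars_subset[OF ind[folded F_def]]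
      by (simp add: finite_subset)
  qed
  show "distributed M lborel (\<lambda>\<omega>. \<Sum>k<N. (cmod (h k \<omega>))\<^sup>2) (erlang_density (N - 1) (1 / \<Omega>))"
    using sum_erlang[of "Inl ` {..<N}"] by (simp add: sum_Inl)
  show "distributed M lborel (\<lambda>\<omega>. \<Sum>k<N. (cmod (g k \<omega>))\<^sup>2) (erlang_density (N - 1) (1 / \<Omega>))"
    using sum_erlang[of "Inr ` {..<N}"] by (simp add: sum_Inr)
  show "indep_var borel (\<lambda>\<omega>. \<Sum>k<N. (cmod (h k \<omega>))\<^sup>2) borel (\<lambda>\<omega>. \<Sum>k<N. (cmod (g k \<omega>))\<^sup>2)"
    using indep_var_sums_disjoint[of F "{..<N} <+> {..<N}" "\<lambda>z. (cmod z)\<^sup>2" "Inl ` {..<N}" "Inr ` {..<N}"] ind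
    by (auto simp: F_def[symmetric] sum_Inl sum_Inr)
qed

lemma (in prob_space) outage_probability_erlang_product:
  fixes X Y :: "'a \<Rightarrow> real" and c R l :: real and N :: nat
  assumes N: "N \<ge> 1" and c: "c > 0" and R: "R > 0" and l: "l > 0"
    and X: "distributed M lborel X (erlang_density (N - 1) l)"
    and Y: "distributed M lborel Y (erlang_density (N - 1) l)"
    and XY: "indep_var borel X borel Y"
    and X_nonneg: "\<And>\<omega>. X \<omega> \<ge> 0" and Y_nonneg: "\<And>\<omega>. Y \<omega> \<ge> 0"
  defines "x \<equiv> l * sqrt ((2 powr R - 1) / c)"
  shows "prob {\<omega> \<in> space M. log 2 (1 + c * X \<omega> * Y \<omega>) < R} = prob {\<omega> \<in> space M. c * X \<omega> * Y \<omega> < 2 powr R - 1}"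
    and "prob {\<omega> \<in> space M. c * X \<omega> * Y \<omega> < 2 powr R - 1}
      = 1 - 2 / fact (N - 1) * (\<Sum>p = 0..N - 1. x ^ (N + p) * bessel_K (real (N - p)) (2 * x) / fact p)"
proof -
  have "log 2 (1 + c * X \<omega> * Y \<omega>) < R \<longleftrightarrow> c * X \<omega> * Y \<omega> < 2 powr R - 1" for \<omega>
  proof -
    have "c * X \<omega> * Y \<omega> \<ge> 0"
      using c X_nonneg[of \<omega>] Y_nonneg[of \<omega>] by simp
    then show ?thesis by (subst log_less_iff) auto
  qed
  then show "prob {\<omega> \<in> space M. log 2 (1 + c * X \<omega> * Y \<omega>) < R} = prob {\<omega> \<in> space M. c * X \<omega> * Y \<omega> < 2 powr R - 1}"
    by simp
  define t where "t = (2 powr R - 1) / c"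
  have t: "t > 0" using c R by (simp add: t_def)
  have [measurable]: "X \<in> borel_measurable M" "Y \<in> borel_measurable M"
    using distributed_measurable[OF X] distributed_measurable[OF Y] by simp_all
  have "{\<omega> \<in> space M. c * X \<omega> * Y \<omega> < 2 powr R - 1} = space M - {\<omega> \<in> space M. t \<le> X \<omega> * Y \<omega>}"
    using c by (auto simp: t_def divide_le_eq not_le mult_ac)
  moreover have "emeasure M {\<omega> \<in> space M. t \<le> X \<omega> * Y \<omega>}
    = ennreal (\<Sum>n\<le>N - 1. 2 * x ^ (N + n) * bessel_K (real (N - n)) (2 * x) / (fact (N - 1) * fact n))"
    using emeasure_erlang_product_atLeast[OF l t X Y XY] N by (simp add: x_def t_def)
  moreover have "(\<Sum>n\<le>N - 1. 2 * x ^ (N + n) * bessel_K (real (N - n)) (2 * x) / (fact (N - 1) * fact n))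
      = 2 / fact (N - 1) * (\<Sum>p = 0..N - 1. x ^ (N + p) * bessel_K (real (N - p)) (2 * x) / fact p)"
    by (simp add: atLeast0AtMost sum_distrib_left mult.assoc)
  moreover have "x \<ge> 0"
    using l t by (simp add: x_def t_def[symmetric])
  ultimately show "prob {\<omega> \<in> space M. c * X \<omega> * Y \<omega> < 2 powr R - 1}
      = 1 - 2 / fact (N - 1) * (\<Sum>p = 0..N - 1. x ^ (N + p) * bessel_K (real (N - p)) (2 * x) / fact p)"
    by (simp add: prob_compl emeasure_eq_measure sum_nonneg bessel_K_nonneg)
qed

theorem mainTheorem1:
  fixes M :: "'a measure" and N :: nat and \<Omega> \<gamma>bar \<tau> R :: real
    and h g :: "nat \<Rightarrow> 'a \<Rightarrow> complex"
  assumes "prob_space M"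
    and "N \<ge> 1" and "\<Omega> > 0" and "\<gamma>bar > 0" and "0 < \<tau>" and "\<tau> < 1" and "R > 0"
    and "prob_space.indep_vars M (\<lambda>_. borel)
           (\<lambda>i. case i of Inl k \<Rightarrow> h k | Inr k \<Rightarrow> g k) ({..<N} <+> {..<N})"
    and "\<forall>k<N. distributed M lborel (h k) (cscg_density \<Omega>)"
    and "\<forall>k<N. distributed M lborel (g k) (cscg_density \<Omega>)"
  defines "\<gamma>A \<equiv> (\<lambda>\<omega>. \<tau> / (1 - \<tau>) * \<gamma>bar * (\<Sum>k<N. (cmod (h k \<omega>))\<^sup>2) * (\<Sum>k<N. (cmod (g k \<omega>))\<^sup>2))"
    and "x \<equiv> sqrt ((1 - \<tau>) * (2 powr R - 1) / (\<tau> * \<gamma>bar * \<Omega>\<^sup>2))"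
  shows "let \<gamma>0 = 2 powr R - 1;
             Pout = measure M {\<omega> \<in> space M. log 2 (1 + \<gamma>A \<omega>) < R};
             S = (\<Sum>p = 0..N - 1. x ^ (N + p) * bessel_K (real (N - p)) (2 * x) / fact p)
         in Pout = measure M {\<omega> \<in> space M. \<gamma>A \<omega> < \<gamma>0}
          \<and> Pout = 1 - 2 / fact (N - 1) * S
          \<and> (1 - Pout) * R * (1 - \<tau>) = 2 * R * (1 - \<tau>) / fact (N - 1) * S"
proof -
  interpret prob_space M by fact
  define c where "c = \<tau> / (1 - \<tau>) * \<gamma>bar"
  have c: "c > 0" using assms(4-6) by (simp add: c_def)
  have x_eq: "x = 1 / \<Omega> * sqrt ((2 powr R - 1) / c)"
  proof -
    have "(1 - \<tau>) * (2 powr R - 1) / (\<tau> * \<gamma>bar * \<Omega>\<^sup>2) = ((2 powr R - 1) / c) / \<Omega>\<^sup>2"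
      using assms(4-6) by (simp add: c_def field_simps)
    then show ?thesis
      using assms(3) by (simp add: x_def real_sqrt_divide real_sqrt_mult)
  qed
  have rate: "1 / \<Omega> > 0" using assms(3) by simp
  note outage = outage_probability_erlang_product[OF assms(2) c assms(7) rate
      channel_gains_erlang_indep[OF assms(3,2,8-10)]]
  define S where "S = (\<Sum>p = 0..N - 1. x ^ (N + p) * bessel_K (real (N - p)) (2 * x) / fact p)"
  have "measure M {\<omega> \<in> space M. log 2 (1 + \<gamma>A \<omega>) < R} = measure M {\<omega> \<in> space M. \<gamma>A \<omega> < 2 powr R - 1}"
    and "measure M {\<omega> \<in> space M. \<gamma>A \<omega> < 2 powr R - 1} = 1 - 2 / fact (N - 1) * S"
    using outage by (simp_all add: sum_nonneg \<gamma>A_def c_def S_def x_eq)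
  then show ?thesis
    unfolding Let_def S_def[symmetric] by (simp add: mult_ac)
qed

end
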